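(* Let $K\subseteq\mathbb{R}^n$ be nonempty, compact and convex, and let $F:K\to\mathbb{R}^n$ be continuously differentiable ($C^1$) and monotone, i.e. $(x-y)^T(F(x)-F(y))\ge 0$ for all $x,y\in K$. Consider the best response dynamics $$\dot x(t)\in \beta(F(x(t)))-x(t),\qquad t\ge 0,\qquad \text{where } \beta(\pi)=\arg\min_{y\in K} y^T\pi .$$ Then the solution set $SOL(K,F)$ of the variational inequality $VI(K,F)$ is globally asymptotically stable (on $K$) under these dynamics.
   Context: The variational inequality $VI(K,F)$: a point $x\in K$ solves it if $(y-x)^TF(x)\ge 0$ for all $y\in K$; $SOL(K,F)$ denotes the set of all solutions. The best response map $\beta(\pi)=\arg\min_{y\in K}y^T\pi$ is set-valued. Solutions of the differential inclusion are understood in the Carathéodory sense (absolutely continuous functions $x:[0,\infty)\to K$ satisfying the inclusion for almost every $t$), with initial conditions $x(0)\in K$; the set $K$ is invariant under the dynamics. *)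

theory Defs
  imports "HOL-Analysis.Analysis"
begin

definition abs_cont_on :: "real set \<Rightarrow> (real \<Rightarrow> 'a::real_normed_vector) \<Rightarrow> bool" where
  "abs_cont_on S x \<longleftrightarrow>
     (\<forall>e>0. \<exists>d>0. \<forall>(m::nat) (a::nat \<Rightarrow> real) b.
        (\<forall>i<m. a i \<le> b i \<and> {a i..b i} \<subseteq> S) \<and>
        (\<forall>i<m. \<forall>j<m. i \<noteq> j \<longrightarrow> b i \<le> a j \<or> b j \<le> a i) \<and>
        (\<Sum>i<m. b i - a i) < d
        \<longrightarrow> (\<Sum>i<m. norm (x (b i) - x (a i))) < e)"

definition best_response :: "(real^'n) set \<Rightarrow> real^'n \<Rightarrow> (real^'n) set" where
  "best_response K p = {y \<in> K. \<forall>z\<in>K. y \<bullet> p \<le> z \<bullet> p}"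

definition SOL :: "(real^'n) set \<Rightarrow> (real^'n \<Rightarrow> real^'n) \<Rightarrow> (real^'n) set" where
  "SOL K F = {x \<in> K. \<forall>y\<in>K. (y - x) \<bullet> F x \<ge> 0}"

definition C1_on :: "(real^'n) set \<Rightarrow> (real^'n \<Rightarrow> real^'n) \<Rightarrow> bool" where
  "C1_on K F \<longleftrightarrow> (\<exists>U G (G' :: (real^'n) \<Rightarrow> ((real^'n) \<Rightarrow>\<^sub>L (real^'n))).
      open U \<and> K \<subseteq> U \<and> (\<forall>x\<in>K. G x = F x) \<and>
      (\<forall>x\<in>U. (G has_derivative blinfun_apply (G' x)) (at x)) \<and>
      continuous_on U G')"

definition monotone_on_K :: "(real^'n) set \<Rightarrow> (real^'n \<Rightarrow> real^'n) \<Rightarrow> bool" where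
  "monotone_on_K K F \<longleftrightarrow> (\<forall>x\<in>K. \<forall>y\<in>K. (x - y) \<bullet> (F x - F y) \<ge> 0)"

definition BR_solution :: "(real^'n) set \<Rightarrow> (real^'n \<Rightarrow> real^'n) \<Rightarrow> (real \<Rightarrow> real^'n) \<Rightarrow> bool" where
  "BR_solution K F x \<longleftrightarrow>
     (\<forall>t\<ge>0. x t \<in> K) \<and>
     (\<forall>T\<ge>0. abs_cont_on {0..T} x) \<and>
     (\<exists>N. N \<in> null_sets lborel \<and>
        (\<forall>t. t \<ge> 0 \<and> t \<notin> N \<longrightarrow>
           (\<exists>v. (x has_vector_derivative v) (at t within {0..}) \<and>
                v \<in> (\<lambda>y. y - x t) ` best_response K (F (x t)))))"

definition BR_GAS :: "(real^'n) set \<Rightarrow> (real^'n \<Rightarrow> real^'n) \<Rightarrow> (real^'n) set \<Rightarrow> bool" where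
  "BR_GAS K F A \<longleftrightarrow>
     (\<forall>e>0. \<exists>d>0. \<forall>x. BR_solution K F x \<and> infdist (x 0) A < d \<longrightarrow>
         (\<forall>t\<ge>0. infdist (x t) A < e)) \<and>
     (\<forall>x. BR_solution K F x \<longrightarrow> ((\<lambda>t. infdist (x t) A) \<longlongrightarrow> 0) at_top)"

end

theory Submission
  imports Defs
begin

text \<open>The gap function G(z) = max over y in K of (z - y) . F(z) is a Lyapunov function for the
  best response dynamics: it is nonnegative on K, vanishes exactly on SOL(K,F), and
  exp(t) G(x(t)) is nonincreasing along every solution. Indeed, at almost every t let b be the
  best response with x'(t) = b - x(t); then g(r) = exp(r) (x(r) - b) . F(x(r)) stays below
  exp(r) G(x(r)) and touches it at r = t, and its derivative there is
  -exp(t) (b - x(t)) . DF(x(t)) (b - x(t)), which is nonpositive because F is monotone. So the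
  upper left Dini derivative of the absolutely continuous function exp(t) G(x(t)) is nonpositive
  almost everywhere, which forces it to be nonincreasing; this step uses Lusin's property (N):
  absolutely continuous functions map null sets to null sets. Stability and attractivity of SOL(K,F)
  then follow from compactness of K and continuity of G.\<close>

section \<open>Absolute continuity\<close>

lemma abs_cont_onD:
  assumes "abs_cont_on S f" "e > 0"
  obtains d where "d > 0"
    "\<And>(m::nat) a b. \<forall>i<m. a i \<le> b i \<and> {a i..b i} \<subseteq> S \<Longrightarrow>
       \<forall>i<m. \<forall>j<m. i \<noteq> j \<longrightarrow> b i \<le> a j \<or> b j \<le> a i \<Longrightarrow>
       (\<Sum>i<m. b i - a i) < d \<Longrightarrow> (\<Sum>i<m. norm (f (b i) - f (a i))) < e"
proof -
  obtain d where "d > 0" and H: "\<forall>(m::nat) a b. (\<forall>i<m. a i \<le> b i \<and> {a i..b i} \<subseteq> S) \<and>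
      (\<forall>i<m. \<forall>j<m. i \<noteq> j \<longrightarrow> b i \<le> a j \<or> b j \<le> a i) \<and>
      (\<Sum>i<m. b i - a i) < d \<longrightarrow> (\<Sum>i<m. norm (f (b i) - f (a i))) < e"
    using assms unfolding abs_cont_on_def by blast
  show thesis
    by (rule that[OF \<open>d > 0\<close>], rule H[rule_format, OF conjI[OF _ conjI]])
qed

lemma abs_cont_onD_finite:
  assumes "abs_cont_on S f" "e > 0"
  obtains d where "d > 0"
    "\<And>I a b. finite I \<Longrightarrow> \<forall>i\<in>I. a i \<le> b i \<and> {a i..b i} \<subseteq> S \<Longrightarrow>
       \<forall>i\<in>I. \<forall>j\<in>I. i \<noteq> j \<longrightarrow> b i \<le> a j \<or> b j \<le> a i \<Longrightarrow>
       (\<Sum>i\<in>I. b i - a i) < d \<Longrightarrow> (\<Sum>i\<in>I. norm (f (b i) - f (a i))) < e"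
proof -
  obtain d where d: "d > 0" and H: "\<And>(m::nat) a b. \<forall>i<m. a i \<le> b i \<and> {a i..b i} \<subseteq> S \<Longrightarrow>
       \<forall>i<m. \<forall>j<m. i \<noteq> j \<longrightarrow> b i \<le> a j \<or> b j \<le> a i \<Longrightarrow>
       (\<Sum>i<m. b i - a i) < d \<Longrightarrow> (\<Sum>i<m. norm (f (b i) - f (a i))) < e"
    by (fact abs_cont_onD[OF assms])
  show thesis
  proof (rule that[OF d])
    fix I and a b :: "'i \<Rightarrow> real"
    assume I: "finite I" and ab: "\<forall>i\<in>I. a i \<le> b i \<and> {a i..b i} \<subseteq> S"
      and sep: "\<forall>i\<in>I. \<forall>j\<in>I. i \<noteq> j \<longrightarrow> b i \<le> a j \<or> b j \<le> a i"
      and len: "(\<Sum>i\<in>I. b i - a i) < d"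
    obtain g where g: "bij_betw g {..<card I} I"
      using ex_bij_betw_nat_finite[OF I] by (auto simp: atLeast0LessThan)
    have reindex: "(\<Sum>i\<in>I. h i) = (\<Sum>k<card I. h (g k))" for h :: "'i \<Rightarrow> real"
      using sum.reindex_bij_betw[OF g, of h] by simp
    have "(\<Sum>k<card I. norm (f (b (g k)) - f (a (g k)))) < e"
    proof (rule H)
      show "\<forall>k<card I. a (g k) \<le> b (g k) \<and> {a (g k)..b (g k)} \<subseteq> S"
        using ab bij_betwE[OF g] by auto
      show "\<forall>k<card I. \<forall>l<card I. k \<noteq> l \<longrightarrow> b (g k) \<le> a (g l) \<or> b (g l) \<le> a (g k)"
        using sep bij_betwE[OF g] bij_betw_imp_inj_on[OF g] by (auto dest: inj_onD)
      show "(\<Sum>k<card I. b (g k) - a (g k)) < d"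
        using len by (simp add: reindex)
    qed
    then show "(\<Sum>i\<in>I. norm (f (b i) - f (a i))) < e"
      by (simp add: reindex)
  qed
qed

lemma abs_cont_on_id: "abs_cont_on S (\<lambda>t. t)"
  unfolding abs_cont_on_def
proof (intro allI impI)
  fix e :: real assume "e > 0"
  show "\<exists>d>0. \<forall>(m::nat) a b. (\<forall>i<m. a i \<le> b i \<and> {a i..b i} \<subseteq> S) \<and>
      (\<forall>i<m. \<forall>j<m. i \<noteq> j \<longrightarrow> b i \<le> a j \<or> b j \<le> a i) \<and>
      (\<Sum>i<m. b i - a i) < d \<longrightarrow> (\<Sum>i<m. norm (b i - a i)) < e"
  proof (intro exI[of _ e] conjI allI impI \<open>e > 0\<close>; elim conjE)
    fix m :: nat and a b :: "nat \<Rightarrow> real"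
    assume ab: "\<forall>i<m. a i \<le> b i \<and> {a i..b i} \<subseteq> S" and "(\<Sum>i<m. b i - a i) < e"
    have "(\<Sum>i<m. norm (b i - a i)) = (\<Sum>i<m. b i - a i)"
      using ab by (intro sum.cong) auto
    with \<open>(\<Sum>i<m. b i - a i) < e\<close> show "(\<Sum>i<m. norm (b i - a i)) < e" by simp
  qed
qed

lemma abs_cont_on_dominated:
  fixes f :: "real \<Rightarrow> 'a::real_normed_vector" and g :: "real \<Rightarrow> 'b::real_normed_vector"
    and h :: "real \<Rightarrow> 'c::real_normed_vector"
  assumes f: "abs_cont_on S f" and g: "abs_cont_on S g" and "0 \<le> A" "0 \<le> B"
    and dom: "\<And>s t. s \<le> t \<Longrightarrow> {s..t} \<subseteq> S \<Longrightarrow>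
      norm (h t - h s) \<le> A * norm (f t - f s) + B * norm (g t - g s)"
  shows "abs_cont_on S h"
  unfolding abs_cont_on_def
proof (intro allI impI)
  fix e :: real assume "e > 0"
  then have eA: "e / (2 * (A + 1)) > 0" and eB: "e / (2 * (B + 1)) > 0"
    using \<open>0 \<le> A\<close> \<open>0 \<le> B\<close> by simp_all
  obtain d1 where d1: "d1 > 0" and H1: "\<And>(m::nat) a b. \<forall>i<m. a i \<le> b i \<and> {a i..b i} \<subseteq> S \<Longrightarrow>
       \<forall>i<m. \<forall>j<m. i \<noteq> j \<longrightarrow> b i \<le> a j \<or> b j \<le> a i \<Longrightarrow>
       (\<Sum>i<m. b i - a i) < d1 \<Longrightarrow> (\<Sum>i<m. norm (f (b i) - f (a i))) < e / (2 * (A + 1))"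
    by (fact abs_cont_onD[OF f eA])
  obtain d2 where d2: "d2 > 0" and H2: "\<And>(m::nat) a b. \<forall>i<m. a i \<le> b i \<and> {a i..b i} \<subseteq> S \<Longrightarrow>
       \<forall>i<m. \<forall>j<m. i \<noteq> j \<longrightarrow> b i \<le> a j \<or> b j \<le> a i \<Longrightarrow>
       (\<Sum>i<m. b i - a i) < d2 \<Longrightarrow> (\<Sum>i<m. norm (g (b i) - g (a i))) < e / (2 * (B + 1))"
    by (fact abs_cont_onD[OF g eB])
  show "\<exists>d>0. \<forall>(m::nat) a b. (\<forall>i<m. a i \<le> b i \<and> {a i..b i} \<subseteq> S) \<and>
        (\<forall>i<m. \<forall>j<m. i \<noteq> j \<longrightarrow> b i \<le> a j \<or> b j \<le> a i) \<and>
        (\<Sum>i<m. b i - a i) < d \<longrightarrow> (\<Sum>i<m. norm (h (b i) - h (a i))) < e"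
  proof (intro exI[of _ "min d1 d2"] conjI allI impI; (elim conjE)?)
    show "min d1 d2 > 0" using d1 d2 by simp
    fix m :: nat and a b :: "nat \<Rightarrow> real"
    assume ab: "\<forall>i<m. a i \<le> b i \<and> {a i..b i} \<subseteq> S"
      and sep: "\<forall>i<m. \<forall>j<m. i \<noteq> j \<longrightarrow> b i \<le> a j \<or> b j \<le> a i"
      and len: "(\<Sum>i<m. b i - a i) < min d1 d2"
    have "(\<Sum>i<m. norm (h (b i) - h (a i)))
        \<le> (\<Sum>i<m. A * norm (f (b i) - f (a i)) + B * norm (g (b i) - g (a i)))"
      using ab by (intro sum_mono dom) auto
    also have "\<dots> = A * (\<Sum>i<m. norm (f (b i) - f (a i))) + B * (\<Sum>i<m. norm (g (b i) - g (a i)))"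
      by (simp add: sum.distrib sum_distrib_left)
    also have "\<dots> \<le> A * (e / (2 * (A + 1))) + B * (e / (2 * (B + 1)))"
    proof (intro add_mono mult_left_mono)
      show "(\<Sum>i<m. norm (f (b i) - f (a i))) \<le> e / (2 * (A + 1))"
        using H1[OF ab sep] len by simp
      show "(\<Sum>i<m. norm (g (b i) - g (a i))) \<le> e / (2 * (B + 1))"
        using H2[OF ab sep] len by simp
    qed (use \<open>0 \<le> A\<close> \<open>0 \<le> B\<close> in auto)
    also have "\<dots> < e / 2 + e / 2"
      using \<open>e > 0\<close> \<open>0 \<le> A\<close> \<open>0 \<le> B\<close> by (intro add_less_le_mono) (auto simp: field_simps)
    finally show "(\<Sum>i<m. norm (h (b i) - h (a i))) < e" by simp
  qed
qed

lemma abs_cont_on_imp_continuous_on: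
  assumes "abs_cont_on {a..b} f"
  shows "continuous_on {a..b} f"
  unfolding continuous_on_iff
proof (intro ballI allI impI)
  fix s e :: real assume s: "s \<in> {a..b}" and "e > 0"
  obtain d where "d > 0" and H: "\<And>(m::nat) \<alpha> \<beta>. \<forall>i<m. \<alpha> i \<le> \<beta> i \<and> {\<alpha> i..\<beta> i} \<subseteq> {a..b} \<Longrightarrow>
       \<forall>i<m. \<forall>j<m. i \<noteq> j \<longrightarrow> \<beta> i \<le> \<alpha> j \<or> \<beta> j \<le> \<alpha> i \<Longrightarrow>
       (\<Sum>i<m. \<beta> i - \<alpha> i) < d \<Longrightarrow> (\<Sum>i<m. norm (f (\<beta> i) - f (\<alpha> i))) < e"
    by (fact abs_cont_onD[OF assms \<open>e > 0\<close>])
  show "\<exists>d>0. \<forall>t\<in>{a..b}. dist t s < d \<longrightarrow> dist (f t) (f s) < e"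
  proof (intro exI[of _ d] conjI ballI impI \<open>d > 0\<close>)
    fix t assume t: "t \<in> {a..b}" and "dist t s < d"
    then have "max s t - min s t < d"
      by (auto simp: dist_real_def max_def min_def abs_if)
    then have "norm (f (max s t) - f (min s t)) < e"
      using s t H[of 1 "\<lambda>_. min s t" "\<lambda>_. max s t"] by simp
    then show "dist (f t) (f s) < e"
      by (cases "s \<le> t") (simp_all add: dist_norm norm_minus_commute max_def min_def)
  qed
qed

lemma abs_cont_on_exp_times_comp:
  fixes x :: "real \<Rightarrow> 'a::real_normed_vector" and V :: "'a \<Rightarrow> real"
  assumes x: "abs_cont_on {a..b} x" and xK: "x ` {a..b} \<subseteq> K"
    and V: "C-lipschitz_on K V" and "bounded (V ` K)"
  shows "abs_cont_on {a..b} (\<lambda>r. exp r * V (x r))"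
proof -
  obtain M where "M > 0" and M: "\<And>z. z \<in> K \<Longrightarrow> \<bar>V z\<bar> \<le> M"
    using \<open>bounded (V ` K)\<close> by (auto simp: bounded_pos)
  have "0 \<le> C" using lipschitz_on_nonneg[OF V] .
  show ?thesis
  proof (rule abs_cont_on_dominated[OF x abs_cont_on_id, where A = "exp b * C" and B = "exp b * M"])
    fix s t :: real assume "s \<le> t" "{s..t} \<subseteq> {a..b}"
    then have "x s \<in> K" "x t \<in> K" "t \<le> b" using xK by auto
    have "exp t - exp s \<le> exp t * (t - s)"
      using exp_ge_add_one_self[of "s - t"] by (simp add: exp_diff field_simps)
    also have "\<dots> \<le> exp b * (t - s)" using \<open>s \<le> t\<close> \<open>t \<le> b\<close> by (intro mult_right_mono) auto
    finally have exp_diff: "exp t - exp s \<le> exp b * (t - s)" .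
    have "\<bar>exp t * V (x t) - exp s * V (x s)\<bar>
        = \<bar>exp t * (V (x t) - V (x s)) + (exp t - exp s) * V (x s)\<bar>"
      by (simp add: algebra_simps)
    also have "\<dots> \<le> exp t * \<bar>V (x t) - V (x s)\<bar> + (exp t - exp s) * \<bar>V (x s)\<bar>"
      using abs_triangle_ineq[of "exp t * (V (x t) - V (x s))" "(exp t - exp s) * V (x s)"] \<open>s \<le> t\<close>
      by (simp add: abs_mult)
    also have "\<dots> \<le> exp b * (C * norm (x t - x s)) + exp b * (t - s) * M"
    proof (intro add_mono mult_mono)
      show "\<bar>V (x t) - V (x s)\<bar> \<le> C * norm (x t - x s)"
        using lipschitz_onD[OF V \<open>x t \<in> K\<close> \<open>x s \<in> K\<close>] by (simp add: dist_norm dist_real_def)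
    qed (use \<open>s \<le> t\<close> \<open>t \<le> b\<close> \<open>0 \<le> C\<close> exp_diff M[OF \<open>x s \<in> K\<close>] in auto)
    finally show "norm (exp t * V (x t) - exp s * V (x s))
        \<le> exp b * C * norm (x t - x s) + exp b * M * norm (t - s)"
      using \<open>s \<le> t\<close> by (simp add: algebra_simps)
  qed (use \<open>0 \<le> C\<close> \<open>M > 0\<close> in auto)
qed

section \<open>Lusin's property (N)\<close>

lemma component_of_open_subset_interval:
  fixes U :: "real set"
  assumes "open U" "U \<subseteq> {a<..<b}" "C \<in> components U"
  shows "C = {Inf C<..<Sup C}" "Inf C < Sup C" "a \<le> Inf C" "Sup C \<le> b"
proof -
  have ne: "C \<noteq> {}" using in_components_nonempty assms(3) by blast
  have sub: "C \<subseteq> {a<..<b}" using in_components_subset[OF assms(3)] assms(2) by blast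
  have op: "open C" using open_components assms by blast
  have iv: "is_interval C" using in_components_connected[OF assms(3)] is_interval_connected_1 by blast
  have "bounded C" using sub bounded_subset[OF bounded_Ioo] by blast
  then have bdd: "bdd_below C" "bdd_above C" by (simp_all add: bounded_imp_bdd_below bounded_imp_bdd_above)
  have inner: "Inf C < x \<and> x < Sup C" if x: "x \<in> C" for x
  proof -
    obtain e where "e > 0" "ball x e \<subseteq> C" using openE[OF op x] by blast
    then have "x - e/2 \<in> C" "x + e/2 \<in> C" by (auto simp: dist_real_def)
    then have "Inf C \<le> x - e/2" "x + e/2 \<le> Sup C"
      using cInf_lower[OF _ bdd(1)] cSup_upper[OF _ bdd(2)] by blast+
    then show ?thesis using \<open>e > 0\<close> by linarith
  qed
  show eq: "C = {Inf C<..<Sup C}"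
  proof
    show "C \<subseteq> {Inf C<..<Sup C}" using inner by auto
    show "{Inf C<..<Sup C} \<subseteq> C"
    proof
      fix y assume y: "y \<in> {Inf C<..<Sup C}"
      obtain c1 where "c1 \<in> C" "c1 < y" using y cInf_less_iff[OF ne bdd(1)] by auto
      moreover obtain c2 where "c2 \<in> C" "y < c2" using y less_cSup_iff[OF ne bdd(2)] by auto
      ultimately show "y \<in> C" using iv[unfolded is_interval_1] by (meson less_imp_le)
    qed
  qed
  show "Inf C < Sup C" using ne inner by fastforce
  show "a \<le> Inf C" using sub by (intro cInf_greatest[OF ne]) auto
  show "Sup C \<le> b" using sub by (intro cSup_least[OF ne]) auto
qed

lemma components_of_open_subset_interval_separated:
  fixes U :: "real set"
  assumes "open U" "U \<subseteq> {a<..<b}" "C \<in> components U" "C' \<in> components U" "C \<noteq> C'"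
  shows "Sup C \<le> Inf C' \<or> Sup C' \<le> Inf C"
proof (rule ccontr)
  assume overlap: "\<not> ?thesis"
  note C = component_of_open_subset_interval[OF assms(1-3)]
    and C' = component_of_open_subset_interval[OF assms(1,2,4)]
  define z where "z = (max (Inf C) (Inf C') + min (Sup C) (Sup C')) / 2"
  have "z \<in> C \<inter> C'"
    using overlap C(2) C'(2) by (subst C(1), subst C'(1)) (auto simp: z_def max_def min_def)
  then show False using components_eq[OF assms(3,4)] assms(5) by blast
qed

lemma sum_length_components_le_measure:
  fixes U :: "real set"
  assumes U: "open U" "U \<subseteq> {a<..<b}" and \<C>: "finite \<C>" "\<C> \<subseteq> components U"
  shows "(\<Sum>C\<in>\<C>. Sup C - Inf C) \<le> measure lebesgue U"
proof -
  note comp = component_of_open_subset_interval[OF U]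
  have C_lmeasurable: "C \<in> lmeasurable" if "C \<in> \<C>" for C
    using \<C> that by (subst comp(1)) auto
  have "(\<Sum>C\<in>\<C>. Sup C - Inf C) = (\<Sum>C\<in>\<C>. measure lebesgue C)"
  proof (rule sum.cong)
    fix C assume "C \<in> \<C>"
    then have C: "C \<in> components U" using \<C> by blast
    have "measure lebesgue C = measure lebesgue {Inf C<..<Sup C}" using comp(1)[OF C] by (rule arg_cong)
    also have "\<dots> = Sup C - Inf C" using comp(2)[OF C] by simp
    finally show "Sup C - Inf C = measure lebesgue C" by simp
  qed simp
  also have "\<dots> = measure lebesgue (\<Union>\<C>)"
    using \<C> C_lmeasurable pairwise_mono[OF pairwise_disjoint_components, of disjnt]
    by (intro measure_Union'[symmetric]) (auto simp: disjnt_def)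
  also have "\<dots> \<le> measure lebesgue U"
  proof (rule measure_mono_fmeasurable)
    show "\<Union>\<C> \<subseteq> U" using \<C> in_components_subset by blast
    show "\<Union>\<C> \<in> sets lebesgue" using \<C> C_lmeasurable by (intro fmeasurableD fmeasurable.finite_Union) auto
    have "bounded U" using U(2) bounded_subset[OF bounded_Ioo] by blast
    then show "U \<in> lmeasurable" using lmeasurable_open U(1) by blast
  qed
  finally show ?thesis .
qed

lemma negligible_imp_small_open_superset:
  assumes "negligible N" "d > 0"
  obtains U where "open U" "N \<subseteq> U" "U \<in> lmeasurable" "measure lebesgue U < d"
proof -
  have N: "N \<in> lmeasurable" "measure lebesgue N = 0"
    using assms(1) negligible_imp_measurable negligible_imp_measure0 by blast+
  obtain U where U: "open U" "N \<subseteq> U" "U - N \<in> lmeasurable" "emeasure lebesgue (U - N) < ennreal d"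
    using sets_lebesgue_outer_open[OF fmeasurableD[OF N(1)] assms(2)] by metis
  have "U = (U - N) \<union> N" using U(2) by blast
  then have "U \<in> lmeasurable" "measure lebesgue U \<le> measure lebesgue (U - N) + measure lebesgue N"
    using U(3) N(1) fmeasurable.Un measure_Un_le[of "U - N" lebesgue N] by (metis fmeasurableD)+
  moreover have "measure lebesgue (U - N) < d"
    using U(3,4) assms(2) by (simp add: emeasure_eq_measure2 ennreal_less_iff)
  ultimately show thesis using that U(1,2) N(2) by simp
qed

lemma abs_cont_on_sum_oscillation_components:
  fixes f :: "real \<Rightarrow> real"
  assumes "abs_cont_on {a..b} f" "e > 0"
  obtains d where "d > 0"
    "\<And>U \<C> p q. open U \<Longrightarrow> U \<subseteq> {a<..<b} \<Longrightarrow> measure lebesgue U < d \<Longrightarrow>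
       finite \<C> \<Longrightarrow> \<C> \<subseteq> components U \<Longrightarrow>
       (\<And>C. C \<in> \<C> \<Longrightarrow> p C \<in> {Inf C..Sup C} \<and> q C \<in> {Inf C..Sup C}) \<Longrightarrow>
       (\<Sum>C\<in>\<C>. \<bar>f (q C) - f (p C)\<bar>) < e"
proof -
  obtain d where "d > 0" and H: "\<And>(I :: real set set) \<alpha> \<beta>. finite I \<Longrightarrow>
       \<forall>i\<in>I. \<alpha> i \<le> \<beta> i \<and> {\<alpha> i..\<beta> i} \<subseteq> {a..b} \<Longrightarrow>
       \<forall>i\<in>I. \<forall>j\<in>I. i \<noteq> j \<longrightarrow> \<beta> i \<le> \<alpha> j \<or> \<beta> j \<le> \<alpha> i \<Longrightarrow>
       (\<Sum>i\<in>I. \<beta> i - \<alpha> i) < d \<Longrightarrow> (\<Sum>i\<in>I. norm (f (\<beta> i) - f (\<alpha> i))) < e"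
    by (fact abs_cont_onD_finite[OF assms])
  show thesis
  proof (rule that[OF \<open>d > 0\<close>])
    fix U \<C> and p q :: "real set \<Rightarrow> real"
    assume U: "open U" "U \<subseteq> {a<..<b}" "measure lebesgue U < d"
      and \<C>: "finite \<C>" "\<C> \<subseteq> components U"
      and pq: "\<And>C. C \<in> \<C> \<Longrightarrow> p C \<in> {Inf C..Sup C} \<and> q C \<in> {Inf C..Sup C}"
    note comp = component_of_open_subset_interval[OF U(1,2)]
    define \<alpha> where "\<alpha> C = min (p C) (q C)" for C
    define \<beta> where "\<beta> C = max (p C) (q C)" for C
    have \<alpha>\<beta>: "Inf C \<le> \<alpha> C" "\<alpha> C \<le> \<beta> C" "\<beta> C \<le> Sup C" if "C \<in> \<C>" for C
      using pq[OF that] by (auto simp: \<alpha>_def \<beta>_def)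
    have "(\<Sum>C\<in>\<C>. norm (f (\<beta> C) - f (\<alpha> C))) < e"
    proof (rule H[OF \<C>(1)])
      show "\<forall>C\<in>\<C>. \<alpha> C \<le> \<beta> C \<and> {\<alpha> C..\<beta> C} \<subseteq> {a..b}"
        using \<alpha>\<beta> comp(3,4) \<C>(2) by (meson atLeastatMost_subset_iff order_trans subsetD)
      show "\<forall>C\<in>\<C>. \<forall>C'\<in>\<C>. C \<noteq> C' \<longrightarrow> \<beta> C \<le> \<alpha> C' \<or> \<beta> C' \<le> \<alpha> C"
      proof (intro ballI impI)
        fix C C' assume C: "C \<in> \<C>" and C': "C' \<in> \<C>" and "C \<noteq> C'"
        then have "Sup C \<le> Inf C' \<or> Sup C' \<le> Inf C"
          using components_of_open_subset_interval_separated[OF U(1,2)] \<C>(2) by blast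
        then show "\<beta> C \<le> \<alpha> C' \<or> \<beta> C' \<le> \<alpha> C"
          using \<alpha>\<beta>[OF C] \<alpha>\<beta>[OF C'] by linarith
      qed
      have "(\<Sum>C\<in>\<C>. \<beta> C - \<alpha> C) \<le> (\<Sum>C\<in>\<C>. Sup C - Inf C)"
        using \<alpha>\<beta> by (intro sum_mono diff_mono) auto
      also have "\<dots> \<le> measure lebesgue U"
        by (rule sum_length_components_le_measure[OF U(1,2) \<C>])
      finally show "(\<Sum>C\<in>\<C>. \<beta> C - \<alpha> C) < d" using U(3) by linarith
    qed
    also have "(\<Sum>C\<in>\<C>. norm (f (\<beta> C) - f (\<alpha> C))) = (\<Sum>C\<in>\<C>. \<bar>f (q C) - f (p C)\<bar>)"
      by (intro sum.cong) (auto simp: \<alpha>_def \<beta>_def min_def max_def)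
    finally show "(\<Sum>C\<in>\<C>. \<bar>f (q C) - f (p C)\<bar>) < e" .
  qed
qed

lemma continuous_on_Icc_image_between_min_max:
  fixes f :: "real \<Rightarrow> real"
  assumes "continuous_on {s..t} f" "s \<le> t"
  obtains p q where "p \<in> {s..t}" "q \<in> {s..t}" "f ` {s..t} \<subseteq> {f p..f q}"
proof -
  have "{s..t} \<noteq> {}" using \<open>s \<le> t\<close> by simp
  obtain p where p: "p \<in> {s..t}" "\<forall>y\<in>{s..t}. f p \<le> f y"
    using continuous_attains_inf[OF compact_Icc \<open>{s..t} \<noteq> {}\<close> assms(1)] by blast
  obtain q where q: "q \<in> {s..t}" "\<forall>y\<in>{s..t}. f y \<le> f q"
    using continuous_attains_sup[OF compact_Icc \<open>{s..t} \<noteq> {}\<close> assms(1)] by blast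
  have "f ` {s..t} \<subseteq> {f p..f q}" using p(2) q(2) by auto
  with p(1) q(1) show thesis by (rule that)
qed

lemma image_open_subset_interval_covered_by_components:
  fixes f :: "real \<Rightarrow> real"
  assumes cont: "continuous_on {a..b} f" and U: "open U" "U \<subseteq> {a<..<b}"
  obtains p q where
    "\<And>C. C \<in> components U \<Longrightarrow> p C \<in> {Inf C..Sup C} \<and> q C \<in> {Inf C..Sup C}"
    "f ` U \<subseteq> (\<Union>C\<in>components U. {f (p C)..f (q C)})"
proof -
  note comp = component_of_open_subset_interval[OF U]
  have "\<exists>p q. p \<in> {Inf C..Sup C} \<and> q \<in> {Inf C..Sup C} \<and> f ` {Inf C..Sup C} \<subseteq> {f p..f q}"
    if "C \<in> components U" for C
  proof -
    have sub: "{Inf C..Sup C} \<subseteq> {a..b}" and "Inf C \<le> Sup C" using comp(2-4)[OF that] by auto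
    obtain p q where "p \<in> {Inf C..Sup C}" "q \<in> {Inf C..Sup C}" "f ` {Inf C..Sup C} \<subseteq> {f p..f q}"
      by (fact continuous_on_Icc_image_between_min_max[OF continuous_on_subset[OF cont sub] \<open>Inf C \<le> Sup C\<close>])
    then show ?thesis by blast
  qed
  then obtain p q where pq: "\<And>C. C \<in> components U \<Longrightarrow>
      p C \<in> {Inf C..Sup C} \<and> q C \<in> {Inf C..Sup C} \<and> f ` {Inf C..Sup C} \<subseteq> {f (p C)..f (q C)}"
    by metis
  have "p C \<in> {Inf C..Sup C} \<and> q C \<in> {Inf C..Sup C}" if "C \<in> components U" for C
    using pq[OF that] by blast
  moreover have "f ` U \<subseteq> (\<Union>C\<in>components U. {f (p C)..f (q C)})"
  proof
    fix z assume "z \<in> f ` U"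
    then obtain C x where C: "C \<in> components U" and "x \<in> C" "z = f x"
      by (metis Union_components UnionE imageE)
    then have "x \<in> {Inf C..Sup C}" using comp(1)[OF C] by (metis greaterThanLessThan_iff atLeastAtMost_iff less_imp_le)
    then show "z \<in> (\<Union>C\<in>components U. {f (p C)..f (q C)})" using pq[OF C] C \<open>z = f x\<close> by blast
  qed
  ultimately show thesis by (rule that)
qed

lemma abs_cont_on_image_of_small_open_set:
  fixes f :: "real \<Rightarrow> real"
  assumes f: "abs_cont_on {a..b} f" and "e > 0"
  obtains d where "d > 0"
    "\<And>U. open U \<Longrightarrow> U \<subseteq> {a<..<b} \<Longrightarrow> measure lebesgue U < d \<Longrightarrow>
       \<exists>T. f ` U \<subseteq> T \<and> T \<in> lmeasurable \<and> measure lebesgue T \<le> e"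
proof -
  obtain d where "d > 0" and osc: "\<And>U \<C> p q. open U \<Longrightarrow> U \<subseteq> {a<..<b} \<Longrightarrow>
      measure lebesgue U < d \<Longrightarrow> finite \<C> \<Longrightarrow> \<C> \<subseteq> components U \<Longrightarrow>
      (\<And>C. C \<in> \<C> \<Longrightarrow> p C \<in> {Inf C..Sup C} \<and> q C \<in> {Inf C..Sup C}) \<Longrightarrow>
      (\<Sum>C\<in>\<C>. \<bar>f (q C) - f (p C)\<bar>) < e"
    by (fact abs_cont_on_sum_oscillation_components[OF f \<open>e > 0\<close>])
  show thesis
  proof (rule that[OF \<open>d > 0\<close>])
    fix U assume U: "open U" "U \<subseteq> {a<..<b}" and "measure lebesgue U < d"
    obtain p q where pq: "\<And>C. C \<in> components U \<Longrightarrow> p C \<in> {Inf C..Sup C} \<and> q C \<in> {Inf C..Sup C}"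
      and cover: "f ` U \<subseteq> (\<Union>C\<in>components U. {f (p C)..f (q C)})"
      by (fact image_open_subset_interval_covered_by_components[OF abs_cont_on_imp_continuous_on[OF f] U])
    have countable: "countable (components U)"
      using open_components[OF U(1)] pairwise_mono[OF pairwise_disjoint_components, of disjnt]
      by (intro countable_disjoint_open_subsets) (auto simp: disjnt_def)
    have bound: "measure lebesgue (\<Union>C\<in>\<C>. {f (p C)..f (q C)}) \<le> e"
      if "\<C> \<subseteq> components U" "finite \<C>" for \<C>
    proof -
      have "measure lebesgue (\<Union>C\<in>\<C>. {f (p C)..f (q C)}) \<le> (\<Sum>C\<in>\<C>. measure lebesgue {f (p C)..f (q C)})"
        using that by (intro measure_UNION_le) auto
      also have "\<dots> \<le> (\<Sum>C\<in>\<C>. \<bar>f (q C) - f (p C)\<bar>)"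
        by (intro sum_mono) auto
      also have "\<dots> < e"
        using pq that by (intro osc[OF U \<open>measure lebesgue U < d\<close> that(2,1)]) blast
      finally show ?thesis by simp
    qed
    show "\<exists>T. f ` U \<subseteq> T \<and> T \<in> lmeasurable \<and> measure lebesgue T \<le> e"
      using cover fmeasurable_UN_bound[OF countable _ bound] measure_UN_bound[OF countable _ bound]
      by auto
  qed
qed

lemma negligible_image_abs_cont_on:
  fixes f :: "real \<Rightarrow> real"
  assumes f: "abs_cont_on {a..b} f" and N: "negligible N"
  shows "negligible (f ` (N \<inter> {a..b}))"
proof -
  have "negligible (f ` (N \<inter> {a<..<b}))"
    unfolding negligible_outer_le
  proof (intro allI impI)
    fix e :: real assume "e > 0"
    obtain d where "d > 0" and small: "\<And>U. open U \<Longrightarrow> U \<subseteq> {a<..<b} \<Longrightarrow> measure lebesgue U < d \<Longrightarrow>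
        \<exists>T. f ` U \<subseteq> T \<and> T \<in> lmeasurable \<and> measure lebesgue T \<le> e"
      by (fact abs_cont_on_image_of_small_open_set[OF f \<open>e > 0\<close>])
    obtain V where V: "open V" "N \<subseteq> V" "V \<in> lmeasurable" "measure lebesgue V < d"
      using negligible_imp_small_open_superset[OF N \<open>d > 0\<close>] by blast
    have "measure lebesgue (V \<inter> {a<..<b}) \<le> measure lebesgue V"
      using V(3) by (intro measure_mono_fmeasurable) auto
    with V(4) have small_V: "measure lebesgue (V \<inter> {a<..<b}) < d" by simp
    have "open (V \<inter> {a<..<b})" using V(1) by auto
    from small[OF this Int_lower2 small_V] obtain T
      where "f ` (V \<inter> {a<..<b}) \<subseteq> T" "T \<in> lmeasurable" "measure lebesgue T \<le> e"
      by blast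
    moreover have "f ` (N \<inter> {a<..<b}) \<subseteq> f ` (V \<inter> {a<..<b})"
      using V(2) by (intro image_mono) auto
    ultimately show "\<exists>T. f ` (N \<inter> {a<..<b}) \<subseteq> T \<and> T \<in> lmeasurable \<and> measure lebesgue T \<le> e"
      by (meson order_trans)
  qed
  moreover have "N \<inter> {a..b} \<subseteq> (N \<inter> {a<..<b}) \<union> {a, b}"
    by auto
  then have "f ` (N \<inter> {a..b}) \<subseteq> f ` (N \<inter> {a<..<b}) \<union> {f a, f b}"
    by blast
  ultimately show ?thesis
    by (meson negligible_Un negligible_insert negligible_empty negligible_subset)
qed

section \<open>Monotonicity from one-sided Dini derivatives\<close>

lemma le_if_locally_left_nonincreasing_off_null_image:
  fixes \<phi> :: "real \<Rightarrow> real"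
  assumes "a \<le> b" and cont: "continuous_on {a..b} \<phi>" and null: "negligible (\<phi> ` (N \<inter> {a..b}))"
    and left: "\<And>s. s \<in> {a<..b} \<Longrightarrow> s \<notin> N \<Longrightarrow> eventually (\<lambda>h. \<phi> s \<le> \<phi> (s - h)) (at_right 0)"
  shows "\<phi> b \<le> \<phi> a"
proof (rule ccontr)
  txt \<open>Choose a level c between \<phi> a and \<phi> b that \<phi> does not take on N. The first point s0
    where \<phi> reaches c is then outside N, yet \<phi> < c just to the left of s0.\<close>
  assume "\<not> \<phi> b \<le> \<phi> a"
  then have "\<not> negligible {\<phi> a<..<\<phi> b}"
    using negligible_interval(2)[of "\<phi> a" "\<phi> b"] by (simp add: box_real)
  then obtain c where c: "\<phi> a < c" "c < \<phi> b" "c \<notin> \<phi> ` (N \<inter> {a..b})"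
    using negligible_subset[OF null] by (metis greaterThanLessThan_iff subsetI)
  define S where "S = {s \<in> {a..b}. \<phi> s = c}"
  define s0 where "s0 = Inf S"
  have hit: "\<exists>r\<in>S. r \<le> s" if "s \<in> {a..b}" "c \<le> \<phi> s" for s
    using IVT'[of \<phi> a c s] c(1) that continuous_on_subset[OF cont, of "{a..s}"]
    by (fastforce simp: S_def)
  have "S \<noteq> {}" using hit[of b] c(2) \<open>a \<le> b\<close> by auto
  moreover have "bdd_below S" by (auto simp: S_def intro: bdd_belowI[of _ a])
  moreover have "closed S"
    using continuous_closed_preimage[OF cont closed_atLeastAtMost closed_singleton[of c]]
    by (simp add: S_def vimage_def Int_def)
  ultimately have "s0 \<in> S" unfolding s0_def by (rule closed_contains_Inf)
  then have s0: "a \<le> s0" "s0 \<le> b" "\<phi> s0 = c" by (auto simp: S_def)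
  have below: "\<phi> s < c" if "a \<le> s" "s < s0" for s
    using hit[of s] that s0(2) cInf_lower[OF _ \<open>bdd_below S\<close>] by (force simp: s0_def)
  have "a < s0" using s0 c(1) by (cases "s0 = a") auto
  moreover have "s0 \<notin> N" using s0 c(3) by auto
  ultimately have "eventually (\<lambda>h. \<phi> s0 \<le> \<phi> (s0 - h) \<and> 0 < h \<and> h < s0 - a) (at_right 0)"
    using s0(2) by (intro eventually_conj left eventually_at_rightI[of 0 "s0 - a"]) auto
  then obtain h where "\<phi> s0 \<le> \<phi> (s0 - h)" "0 < h" "h < s0 - a"
    using eventually_happens[of _ "at_right (0::real)"] by (auto simp: trivial_limit_at_right_real)
  then show False using below[of "s0 - h"] s0(3) by simp
qed

lemma abs_cont_on_nonincreasing_if_left_Dini_nonpos: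
  fixes \<psi> :: "real \<Rightarrow> real"
  assumes "a \<le> b" and \<psi>: "abs_cont_on {a..b} \<psi>" and "negligible N"
    and Dini: "\<And>s \<eta>. s \<in> {a<..b} \<Longrightarrow> s \<notin> N \<Longrightarrow> \<eta> > 0 \<Longrightarrow>
       eventually (\<lambda>h. \<psi> s - \<psi> (s - h) \<le> \<eta> * h) (at_right 0)"
  shows "\<psi> b \<le> \<psi> a"
proof (rule field_le_epsilon)
  fix e :: real assume "e > 0"
  define \<eta> where "\<eta> = e / (b - a + 1)"
  have "\<eta> > 0" using \<open>e > 0\<close> \<open>a \<le> b\<close> by (simp add: \<eta>_def)
  define \<phi> where "\<phi> s = \<psi> s - \<eta> * s" for s
  have "abs_cont_on {a..b} \<phi>"
  proof (rule abs_cont_on_dominated[OF \<psi> abs_cont_on_id, where A = 1 and B = \<eta>])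
    fix s t :: real assume "s \<le> t"
    have "\<phi> t - \<phi> s = (\<psi> t - \<psi> s) - \<eta> * (t - s)" by (simp add: \<phi>_def algebra_simps)
    then show "norm (\<phi> t - \<phi> s) \<le> 1 * norm (\<psi> t - \<psi> s) + \<eta> * norm (t - s)"
      using abs_triangle_ineq4[of "\<psi> t - \<psi> s" "\<eta> * (t - s)"] \<open>\<eta> > 0\<close> by (simp add: abs_mult)
  qed (use \<open>\<eta> > 0\<close> in auto)
  then have "\<phi> b \<le> \<phi> a"
  proof (intro le_if_locally_left_nonincreasing_off_null_image[OF \<open>a \<le> b\<close>])
    show "continuous_on {a..b} \<phi>" by (rule abs_cont_on_imp_continuous_on) fact
    show "negligible (\<phi> ` (N \<inter> {a..b}))" by (rule negligible_image_abs_cont_on) fact+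
    show "eventually (\<lambda>h. \<phi> s \<le> \<phi> (s - h)) (at_right 0)" if "s \<in> {a<..b}" "s \<notin> N" for s
      using Dini[OF that \<open>\<eta> > 0\<close>] by eventually_elim (simp add: \<phi>_def algebra_simps)
  qed
  then have "\<psi> b - \<psi> a \<le> \<eta> * (b - a)" by (simp add: \<phi>_def algebra_simps)
  also have "\<dots> \<le> e" using \<open>e > 0\<close> \<open>a \<le> b\<close> by (simp add: \<eta>_def field_simps)
  finally show "\<psi> b \<le> \<psi> a + e" by simp
qed

lemma left_Dini_bound_if_touching_from_below:
  fixes g \<psi> :: "real \<Rightarrow> real"
  assumes g: "(g has_real_derivative D) (at s within {a..})" and "D < \<eta>" and "a < s"
    and touch: "g s = \<psi> s" and below: "\<And>r. a \<le> r \<Longrightarrow> g r \<le> \<psi> r"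
  shows "eventually (\<lambda>h. \<psi> s - \<psi> (s - h) \<le> \<eta> * h) (at_right 0)"
proof -
  have "((\<lambda>r. (g r - g s) / (r - s)) \<longlongrightarrow> D) (at s within {a..})"
    using g by (simp add: has_field_derivative_iff)
  from order_tendstoD(2)[OF this \<open>D < \<eta>\<close>]
  obtain d where "d > 0" and d: "\<And>r. r \<in> {a..} \<Longrightarrow> r \<noteq> s \<Longrightarrow> dist r s < d \<Longrightarrow> (g r - g s) / (r - s) < \<eta>"
    unfolding eventually_at by blast
  show ?thesis
  proof (rule eventually_at_rightI[of 0 "min d (s - a)"])
    fix h assume h: "h \<in> {0<..<min d (s - a)}"
    then have "(g (s - h) - g s) / (s - h - s) < \<eta>" by (intro d) (auto simp: dist_real_def)
    then have "g s - g (s - h) < \<eta> * h" using h by (simp add: field_simps)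
    moreover have "g (s - h) \<le> \<psi> (s - h)" using h by (intro below) auto
    ultimately show "\<psi> s - \<psi> (s - h) \<le> \<eta> * h" using touch by simp
  qed (use \<open>d > 0\<close> \<open>a < s\<close> in simp)
qed

section \<open>The gap function\<close>

lemma best_response_nonempty:
  assumes "compact K" "K \<noteq> {}"
  shows "best_response K p \<noteq> {}"
proof -
  have "continuous_on K (\<lambda>y. y \<bullet> p)" by (intro continuous_intros)
  then obtain y where "y \<in> K" "\<forall>z\<in>K. y \<bullet> p \<le> z \<bullet> p"
    using continuous_attains_inf[OF assms] by blast
  then show ?thesis unfolding best_response_def by blast
qed

text \<open>gap K F z is the maximum of (z - y) . F z over y in K. Every best response attains this
  maximum, so the choice made by SOME is immaterial when K is compact and nonempty.\<close>

definition gap :: "(real^'n) set \<Rightarrow> (real^'n \<Rightarrow> real^'n) \<Rightarrow> real^'n \<Rightarrow> real" where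
  "gap K F z = (z - (SOME y. y \<in> best_response K (F z))) \<bullet> F z"

context
  fixes K :: "(real^'n) set" and F :: "real^'n \<Rightarrow> real^'n"
  assumes compact: "compact K" and nonempty: "K \<noteq> {}"
begin

lemma gap_eq:
  assumes "y \<in> best_response K (F z)"
  shows "gap K F z = (z - y) \<bullet> F z"
proof -
  have "(SOME y. y \<in> best_response K (F z)) \<in> best_response K (F z)"
    using best_response_nonempty[OF compact nonempty] by (simp add: some_in_eq)
  with assms have "(SOME y. y \<in> best_response K (F z)) \<bullet> F z = y \<bullet> F z"
    by (auto simp: best_response_def intro: antisym)
  then show ?thesis by (simp add: gap_def inner_diff_left)
qed

lemma gap_ge:
  assumes "y \<in> K"
  shows "(z - y) \<bullet> F z \<le> gap K F z"
proof -
  obtain y0 where y0: "y0 \<in> best_response K (F z)"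
    using best_response_nonempty[OF compact nonempty] by blast
  then have "y0 \<bullet> F z \<le> y \<bullet> F z" using assms by (auto simp: best_response_def)
  then show ?thesis using gap_eq[OF y0] by (simp add: inner_diff_left)
qed

lemma gap_nonneg: "z \<in> K \<Longrightarrow> 0 \<le> gap K F z"
  using gap_ge[of z z] by simp

lemma gap_eq_0_iff:
  assumes "z \<in> K"
  shows "gap K F z = 0 \<longleftrightarrow> z \<in> SOL K F"
proof
  assume "gap K F z = 0"
  then have "0 \<le> (y - z) \<bullet> F z" if "y \<in> K" for y
    using gap_ge[OF that, of z] by (simp add: inner_diff_left)
  then show "z \<in> SOL K F" using assms by (simp add: SOL_def)
next
  assume "z \<in> SOL K F"
  obtain y where y: "y \<in> best_response K (F z)"
    using best_response_nonempty[OF compact nonempty] by blast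
  then have "(z - y) \<bullet> F z \<le> 0"
    using \<open>z \<in> SOL K F\<close> by (force simp: SOL_def best_response_def inner_diff_left)
  then show "gap K F z = 0" using gap_eq[OF y] gap_nonneg[OF assms] by simp
qed

lemma gap_diff_le:
  assumes "y \<in> best_response K (F z)"
  shows "gap K F z - gap K F w \<le> (z - y) \<bullet> (F z - F w) + (z - w) \<bullet> F w"
proof -
  have "(w - y) \<bullet> F w \<le> gap K F w" using assms by (intro gap_ge) (simp add: best_response_def)
  then show ?thesis using gap_eq[OF assms] by (simp add: algebra_simps inner_diff_left inner_diff_right)
qed

lemma lipschitz_on_gap:
  assumes "L-lipschitz_on K F"
  obtains C where "C-lipschitz_on K (gap K F)"
proof -
  obtain R where "R > 0" and R: "\<And>z. z \<in> K \<Longrightarrow> norm z \<le> R"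
    using compact_imp_bounded[OF compact] by (auto simp: bounded_pos)
  have "continuous_on K F" using assms by (rule lipschitz_on_continuous_on)
  then obtain M where "M > 0" and M: "\<And>z. z \<in> K \<Longrightarrow> norm (F z) \<le> M"
    using compact_imp_bounded[OF compact_continuous_image[OF \<open>continuous_on K F\<close> compact]]
    by (auto simp: bounded_pos)
  have L: "0 \<le> L" using lipschitz_on_nonneg[OF assms] .
  have one_sided: "gap K F z - gap K F w \<le> (2 * R * L + M) * dist z w" if "z \<in> K" "w \<in> K" for z w
  proof -
    obtain y where y: "y \<in> best_response K (F z)"
      using best_response_nonempty[OF compact nonempty] by blast
    then have "y \<in> K" by (simp add: best_response_def)
    have "(z - y) \<bullet> (F z - F w) \<le> norm (z - y) * norm (F z - F w)"
      by (rule norm_cauchy_schwarz)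
    also have "\<dots> \<le> (2 * R) * (L * dist z w)"
    proof (rule mult_mono)
      show "norm (z - y) \<le> 2 * R"
        using R[OF \<open>z \<in> K\<close>] R[OF \<open>y \<in> K\<close>] norm_triangle_ineq4[of z y] by linarith
      show "norm (F z - F w) \<le> L * dist z w"
        using lipschitz_onD[OF assms that] by (simp add: dist_norm)
    qed (use L \<open>R > 0\<close> in auto)
    finally have "(z - y) \<bullet> (F z - F w) \<le> 2 * R * L * dist z w" by simp
    moreover have "(z - w) \<bullet> F w \<le> norm (z - w) * norm (F w)"
      by (rule norm_cauchy_schwarz)
    moreover have "norm (z - w) * norm (F w) \<le> M * dist z w"
      using M[OF \<open>w \<in> K\<close>] by (simp add: dist_norm mult.commute mult_right_mono)
    ultimately show ?thesis using gap_diff_le[OF y, of w] by (simp add: algebra_simps)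
  qed
  have "\<bar>gap K F z - gap K F w\<bar> \<le> (2 * R * L + M) * dist z w" if "z \<in> K" "w \<in> K" for z w
    using one_sided[OF that] one_sided[OF that(2,1)] by (simp add: dist_commute abs_le_iff)
  then have "(2 * R * L + M)-lipschitz_on K (gap K F)"
    using \<open>R > 0\<close> \<open>M > 0\<close> L by (intro lipschitz_onI) (simp_all add: dist_real_def)
  then show thesis by (rule that)
qed

end

section \<open>Exponential decay of the gap along best response dynamics\<close>

lemma BR_solution_in: "BR_solution K F x \<Longrightarrow> 0 \<le> t \<Longrightarrow> x t \<in> K"
  by (simp add: BR_solution_def)

lemma lipschitz_on_if_C1_on:
  fixes K :: "(real^'n) set"
  assumes "C1_on K F" "compact K" "convex K"
  obtains L where "L-lipschitz_on K F"
proof -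
  obtain U G and G' :: "real^'n \<Rightarrow> ((real^'n) \<Rightarrow>\<^sub>L (real^'n))" where "open U" "K \<subseteq> U"
    and GF: "\<forall>z\<in>K. G z = F z" and G: "\<forall>z\<in>U. (G has_derivative blinfun_apply (G' z)) (at z)"
    and "continuous_on U G'"
    using assms(1) unfolding C1_on_def by blast
  have "bounded (G' ` K)"
    using \<open>continuous_on U G'\<close> \<open>K \<subseteq> U\<close>
    by (intro compact_imp_bounded compact_continuous_image[OF _ \<open>compact K\<close>]) (rule continuous_on_subset)
  then obtain B where "B > 0" and B: "\<And>z. z \<in> K \<Longrightarrow> norm (G' z) \<le> B" by (auto simp: bounded_pos)
  have "norm (G z - G w) \<le> B * norm (z - w)" if "z \<in> K" "w \<in> K" for z w
  proof (rule differentiable_bound[OF \<open>convex K\<close> _ _ that])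
    fix y assume "y \<in> K"
    then show "(G has_derivative blinfun_apply (G' y)) (at y within K)"
      using G \<open>K \<subseteq> U\<close> by (blast intro: has_derivative_at_withinI)
    show "onorm (blinfun_apply (G' y)) \<le> B" using B[OF \<open>y \<in> K\<close>] by (simp add: norm_blinfun.rep_eq)
  qed
  then have "B-lipschitz_on K F"
    using GF \<open>B > 0\<close> by (intro lipschitz_onI) (auto simp: dist_norm)
  then show thesis by (rule that)
qed

lemma derivative_nonneg_if_monotone_on_K:
  fixes G :: "real^'n \<Rightarrow> real^'n"
  assumes "convex K" "monotone_on_K K F" "\<forall>z\<in>K. G z = F z" and G: "(G has_derivative G') (at z)"
    and "z \<in> K" "y \<in> K"
  shows "0 \<le> (y - z) \<bullet> G' (y - z)"
proof -
  define v where "v = y - z"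
  define q where "q = (\<lambda>h::real. v \<bullet> G (z + h *\<^sub>R v))"
  have line: "((\<lambda>h. z + h *\<^sub>R v) has_derivative (\<lambda>h. h *\<^sub>R v)) (at 0)"
    by (auto intro!: derivative_eq_intros)
  have "(G has_derivative G') (at (z + 0 *\<^sub>R v))" using G by (simp only: scale_zero_left add_0_right)
  from has_derivative_inner_right[OF has_derivative_compose[OF line this], of v]
  have "(q has_derivative (\<lambda>h. v \<bullet> G' (h *\<^sub>R v))) (at 0)"
    by (simp add: q_def o_def)
  then have "(q has_derivative (\<lambda>h. (v \<bullet> G' v) * h)) (at 0)"
    by (rule has_derivative_eq_rhs) (simp add: linear_cmul[OF has_derivative_linear[OF G]] fun_eq_iff)
  then have "(q has_real_derivative v \<bullet> G' v) (at 0 within {0<..})"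
    unfolding has_field_derivative_def by (rule has_derivative_at_withinI)
  then have "((\<lambda>h. (q h - q 0) / (h - 0)) \<longlongrightarrow> v \<bullet> G' v) (at_right 0)"
    by (simp add: has_field_derivative_iff)
  moreover have "eventually (\<lambda>h. 0 \<le> (q h - q 0) / (h - 0)) (at_right 0)"
  proof (rule eventually_at_rightI[of 0 1])
    fix h :: real assume h: "h \<in> {0<..<1}"
    have "z + h *\<^sub>R v = (1 - h) *\<^sub>R z + h *\<^sub>R y" by (simp add: v_def algebra_simps)
    then have "z + h *\<^sub>R v \<in> K" using convexD_alt[OF assms(1) \<open>z \<in> K\<close> \<open>y \<in> K\<close>] h by auto
    then have "0 \<le> (h *\<^sub>R v) \<bullet> (F (z + h *\<^sub>R v) - F z)"
      using assms(2) \<open>z \<in> K\<close> unfolding monotone_on_K_def by fastforce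
    then have "0 \<le> q h - q 0"
      using h assms(3) \<open>z + h *\<^sub>R v \<in> K\<close> \<open>z \<in> K\<close> by (simp add: q_def inner_diff_right zero_le_mult_iff)
    then show "0 \<le> (q h - q 0) / (h - 0)" using h by simp
  qed simp
  ultimately have "0 \<le> v \<bullet> G' v"
    by (rule tendsto_lowerbound) (simp add: trivial_limit_at_right_real)
  then show ?thesis by (simp add: v_def)
qed

lemma exp_times_inner_has_real_derivative:
  fixes x :: "real \<Rightarrow> 'a::real_inner" and G :: "'a \<Rightarrow> 'a"
  assumes x: "(x has_vector_derivative v) (at s within S)" and G: "(G has_derivative G') (at (x s))"
  shows "((\<lambda>r. exp r * ((x r - b) \<bullet> G (x r))) has_real_derivative
           exp s * ((x s - b) \<bullet> G (x s) + v \<bullet> G (x s) + (x s - b) \<bullet> G' v)) (at s within S)"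
proof -
  have x': "(x has_derivative (\<lambda>h. h *\<^sub>R v)) (at s within S)"
    using x by (simp add: has_vector_derivative_def)
  have "((\<lambda>r. (x r - b) \<bullet> G (x r)) has_derivative
      (\<lambda>h. (x s - b) \<bullet> G' (h *\<^sub>R v) + (h *\<^sub>R v) \<bullet> G (x s))) (at s within S)"
    by (intro has_derivative_inner has_derivative_diff[OF x' has_derivative_const, simplified]
        has_derivative_compose[OF x' G])
  then have "((\<lambda>r. (x r - b) \<bullet> G (x r)) has_real_derivative v \<bullet> G (x s) + (x s - b) \<bullet> G' v) (at s within S)"
    unfolding has_field_derivative_def
    by (rule has_derivative_eq_rhs)
      (simp add: linear_cmul[OF has_derivative_linear[OF G]] fun_eq_iff algebra_simps)
  from DERIV_mult[OF has_field_derivative_at_within[OF DERIV_exp] this]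
  show ?thesis by (simp add: algebra_simps)
qed

lemma exp_gap_left_Dini_bound:
  fixes K :: "(real^'n) set" and x :: "real \<Rightarrow> real^'n"
  assumes "compact K" "K \<noteq> {}" "convex K" "monotone_on_K K F"
    and GF: "\<forall>z\<in>K. G z = F z" and G: "(G has_derivative G') (at (x s))"
    and xK: "\<And>r. 0 \<le> r \<Longrightarrow> x r \<in> K" and "0 < s"
    and x: "(x has_vector_derivative b - x s) (at s within {0..})"
    and b: "b \<in> best_response K (F (x s))" and "0 < \<eta>"
  shows "eventually (\<lambda>h. exp s * gap K F (x s) - exp (s - h) * gap K F (x (s - h)) \<le> \<eta> * h)
    (at_right 0)"
proof -
  have "b \<in> K" using b by (simp add: best_response_def)
  define g where "g r = exp r * ((x r - b) \<bullet> G (x r))" for r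
  define D where "D = exp s * ((x s - b) \<bullet> G (x s) + (b - x s) \<bullet> G (x s) + (x s - b) \<bullet> G' (b - x s))"
  have "(g has_real_derivative D) (at s within {0..})"
    unfolding g_def D_def by (rule exp_times_inner_has_real_derivative[OF x G])
  moreover have "D < \<eta>"
  proof -
    have "0 \<le> (b - x s) \<bullet> G' (b - x s)"
      using \<open>convex K\<close> \<open>monotone_on_K K F\<close> GF G xK \<open>0 < s\<close> \<open>b \<in> K\<close>
      by (intro derivative_nonneg_if_monotone_on_K) auto
    then have "0 \<le> exp s * ((b - x s) \<bullet> G' (b - x s))" by simp
    moreover have "D = - exp s * ((b - x s) \<bullet> G' (b - x s))"
      unfolding D_def by (simp add: algebra_simps inner_diff_left inner_commute)
    ultimately show ?thesis using \<open>0 < \<eta>\<close> by linarith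
  qed
  ultimately show ?thesis
  proof (rule left_Dini_bound_if_touching_from_below[OF _ _ \<open>0 < s\<close>])
    show "g s = exp s * gap K F (x s)"
      using gap_eq[where F = F and z = "x s", OF \<open>compact K\<close> \<open>K \<noteq> {}\<close> b] GF xK \<open>0 < s\<close> by (simp add: g_def)
    show "g r \<le> exp r * gap K F (x r)" if "0 \<le> r" for r
      using gap_ge[OF \<open>compact K\<close> \<open>K \<noteq> {}\<close> \<open>b \<in> K\<close>, of "x r" F] GF xK[OF that]
      by (simp add: g_def)
  qed
qed

lemma BR_solution_exp_gap_nonincreasing:
  fixes K :: "(real^'n) set"
  assumes "compact K" "K \<noteq> {}" "convex K" "C1_on K F" "monotone_on_K K F"
    and sol: "BR_solution K F x" and "0 \<le> t"
  shows "exp t * gap K F (x t) \<le> gap K F (x 0)"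
proof -
  obtain U G and G' :: "real^'n \<Rightarrow> ((real^'n) \<Rightarrow>\<^sub>L (real^'n))" where "K \<subseteq> U"
    and GF: "\<forall>z\<in>K. G z = F z" and G: "\<forall>z\<in>U. (G has_derivative blinfun_apply (G' z)) (at z)"
    using \<open>C1_on K F\<close> unfolding C1_on_def by blast
  obtain L where "L-lipschitz_on K F"
    using lipschitz_on_if_C1_on[OF \<open>C1_on K F\<close> \<open>compact K\<close> \<open>convex K\<close>] .
  then obtain C where C: "C-lipschitz_on K (gap K F)"
    using lipschitz_on_gap[OF \<open>compact K\<close> \<open>K \<noteq> {}\<close>] by blast
  have "bounded (gap K F ` K)"
    using compact_imp_bounded[OF compact_continuous_image[OF lipschitz_on_continuous_on[OF C] \<open>compact K\<close>]] .
  obtain N where "N \<in> null_sets lborel" and N: "\<forall>s. 0 \<le> s \<and> s \<notin> N \<longrightarrow>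
      (\<exists>v. (x has_vector_derivative v) (at s within {0..}) \<and> v \<in> (\<lambda>y. y - x s) ` best_response K (F (x s)))"
    using sol unfolding BR_solution_def by (elim conjE exE) blast
  note xK = BR_solution_in[OF sol]
  have "(\<lambda>r. exp r * gap K F (x r)) t \<le> (\<lambda>r. exp r * gap K F (x r)) 0"
  proof (rule abs_cont_on_nonincreasing_if_left_Dini_nonpos[OF \<open>0 \<le> t\<close>])
    show "abs_cont_on {0..t} (\<lambda>r. exp r * gap K F (x r))"
      using sol xK \<open>0 \<le> t\<close> unfolding BR_solution_def
      by (intro abs_cont_on_exp_times_comp[OF _ _ C \<open>bounded (gap K F ` K)\<close>]) auto
    show "negligible N"
      using \<open>N \<in> null_sets lborel\<close> by (simp add: negligible_iff_null_sets null_sets_completionI)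
    fix s \<eta> :: real assume s: "s \<in> {0<..t}" "s \<notin> N" and "0 < \<eta>"
    then have "\<exists>v. (x has_vector_derivative v) (at s within {0..}) \<and>
        v \<in> (\<lambda>y. y - x s) ` best_response K (F (x s))"
      using N by simp
    then obtain b where x: "(x has_vector_derivative b - x s) (at s within {0..})"
      and b: "b \<in> best_response K (F (x s))"
      by blast
    have "x s \<in> U" using xK[of s] \<open>K \<subseteq> U\<close> s by auto
    then have "(G has_derivative blinfun_apply (G' (x s))) (at (x s))"
      using G by blast
    then show "eventually (\<lambda>h. exp s * gap K F (x s) - exp (s - h) * gap K F (x (s - h)) \<le> \<eta> * h)
        (at_right 0)"
      using s by (intro exp_gap_left_Dini_bound[OF assms(1-3,5) GF _ xK _ x b \<open>0 < \<eta>\<close>]) auto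
  qed
  then show ?thesis by simp
qed

section \<open>Global asymptotic stability\<close>

lemma small_values_near_zeros:
  fixes V :: "'a::metric_space \<Rightarrow> real"
  assumes "compact K" "continuous_on K V" "\<And>z. z \<in> K \<Longrightarrow> 0 \<le> V z" "0 < e"
  obtains \<eta> where "0 < \<eta>" "\<And>z. z \<in> K \<Longrightarrow> V z < \<eta> \<Longrightarrow> infdist z {z \<in> K. V z = 0} < e"
proof -
  define K' where "K' = K \<inter> {z. e \<le> infdist z {z \<in> K. V z = 0}}"
  show thesis
  proof (cases "K' = {}")
    case True
    then show thesis by (intro that[of 1]) (auto simp: K'_def not_le)
  next
    case False
    have "closed {z. e \<le> infdist z {z \<in> K. V z = 0}}"
      by (intro closed_Collect_le continuous_intros)
    then have "compact K'" unfolding K'_def using \<open>compact K\<close> by (intro compact_Int_closed)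
    moreover have "continuous_on K' V"
      using \<open>continuous_on K V\<close> by (rule continuous_on_subset) (simp add: K'_def)
    ultimately obtain z1 where z1: "z1 \<in> K'" "\<And>z. z \<in> K' \<Longrightarrow> V z1 \<le> V z"
      using continuous_attains_inf[OF _ False] by blast
    have "V z1 \<noteq> 0" using z1(1) \<open>0 < e\<close> by (auto simp: K'_def)
    then have "0 < V z1" using assms(3) z1(1) by (force simp: K'_def)
    then show thesis
      by (rule that) (use z1 in \<open>force simp: K'_def not_le\<close>)
  qed
qed

context
  fixes K :: "(real^'n) set" and F :: "real^'n \<Rightarrow> real^'n" and V :: "real^'n \<Rightarrow> real"
  assumes compact: "compact K" and continuous: "continuous_on K V"
    and nonneg: "\<And>z. z \<in> K \<Longrightarrow> 0 \<le> V z"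
    and decay: "\<And>x t. BR_solution K F x \<Longrightarrow> 0 \<le> t \<Longrightarrow> exp t * V (x t) \<le> V (x 0)"
begin

lemma BR_solution_stable_if_exp_Lyapunov:
  assumes "0 < e"
  shows "\<exists>d>0. \<forall>x. BR_solution K F x \<and> infdist (x 0) {z \<in> K. V z = 0} < d \<longrightarrow>
    (\<forall>t\<ge>0. infdist (x t) {z \<in> K. V z = 0} < e)"
proof -
  define A where "A = {z \<in> K. V z = 0}"
  obtain \<eta> where "0 < \<eta>" and \<eta>: "\<And>z. z \<in> K \<Longrightarrow> V z < \<eta> \<Longrightarrow> infdist z A < e"
    using small_values_near_zeros[OF compact continuous nonneg \<open>0 < e\<close>] unfolding A_def by blast
  obtain \<delta> where "0 < \<delta>" and \<delta>: "\<forall>z\<in>K. \<forall>w\<in>K. dist w z < \<delta> \<longrightarrow> dist (V w) (V z) < \<eta>"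
    using compact_uniformly_continuous[OF continuous compact] \<open>0 < \<eta>\<close>
    unfolding uniformly_continuous_on_def by blast
  have "closed A"
    using continuous_closed_preimage[OF continuous compact_imp_closed[OF compact] closed_singleton[of 0]]
    by (simp add: A_def vimage_def Int_def)
  have "infdist (x t) A < e" if sol: "BR_solution K F x" and near: "infdist (x 0) A < \<delta>" and "0 \<le> t"
    for x t
  proof (cases "A = {}")
    case False
    then obtain w where "w \<in> A" "infdist (x 0) A = dist (x 0) w"
      using infdist_attains_inf[OF \<open>closed A\<close>] by blast
    then have "V (x 0) < \<eta>"
      using \<delta> BR_solution_in[OF sol, of 0] near by (force simp: A_def dist_real_def)
    moreover have "V (x t) \<le> exp t * V (x t)"
      using mult_right_mono[of 1 "exp t" "V (x t)"] nonneg[OF BR_solution_in[OF sol \<open>0 \<le> t\<close>]] \<open>0 \<le> t\<close>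
      by simp
    ultimately have "V (x t) < \<eta>" using decay[OF sol \<open>0 \<le> t\<close>] by linarith
    then show ?thesis using \<eta> BR_solution_in[OF sol \<open>0 \<le> t\<close>] by simp
  qed (simp add: infdist_def \<open>0 < e\<close>)
  then show ?thesis using \<open>0 < \<delta>\<close> unfolding A_def by blast
qed

lemma BR_solution_attracted_if_exp_Lyapunov:
  assumes sol: "BR_solution K F x"
  shows "((\<lambda>t. infdist (x t) {z \<in> K. V z = 0}) \<longlongrightarrow> 0) at_top"
proof (rule order_tendstoI)
  fix e :: real assume "0 < e"
  obtain \<eta> where "0 < \<eta>" and \<eta>: "\<And>z. z \<in> K \<Longrightarrow> V z < \<eta> \<Longrightarrow> infdist z {z \<in> K. V z = 0} < e"
    using small_values_near_zeros[OF compact continuous nonneg \<open>0 < e\<close>] by blast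
  have "((\<lambda>t. V (x 0) / exp t) \<longlongrightarrow> 0) at_top"
    by (intro tendsto_divide_0[OF tendsto_const] filterlim_at_top_imp_at_infinity exp_at_top)
  then have "eventually (\<lambda>t. V (x 0) / exp t < \<eta>) at_top"
    using \<open>0 < \<eta>\<close> by (rule order_tendstoD)
  then show "eventually (\<lambda>t. infdist (x t) {z \<in> K. V z = 0} < e) at_top"
    using eventually_ge_at_top[of 0]
  proof eventually_elim
    case (elim t)
    have "V (x t) \<le> V (x 0) / exp t"
      using decay[OF sol \<open>0 \<le> t\<close>] by (simp add: pos_le_divide_eq mult.commute)
    then have "V (x t) < \<eta>" using elim(1) by linarith
    then show ?case using \<eta> BR_solution_in[OF sol \<open>0 \<le> t\<close>] by blast
  qed
next
  fix e :: real assume "e < 0"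
  then show "eventually (\<lambda>t. e < infdist (x t) {z \<in> K. V z = 0}) at_top"
    by (intro always_eventually allI less_le_trans[OF _ infdist_nonneg])
qed

lemma BR_GAS_if_exp_Lyapunov: "BR_GAS K F {z \<in> K. V z = 0}"
  unfolding BR_GAS_def
  using BR_solution_stable_if_exp_Lyapunov BR_solution_attracted_if_exp_Lyapunov by blast

end

theorem theorem1:
  fixes K :: "(real^'n) set" and F :: "real^'n \<Rightarrow> real^'n"
  assumes "K \<noteq> {}" and "compact K" and "convex K"
    and "C1_on K F"
    and "monotone_on_K K F"
  shows "BR_GAS K F (SOL K F)"
proof -
  obtain L where "L-lipschitz_on K F"
    using lipschitz_on_if_C1_on[OF \<open>C1_on K F\<close> \<open>compact K\<close> \<open>convex K\<close>] .
  then obtain C where "C-lipschitz_on K (gap K F)"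
    using lipschitz_on_gap[OF \<open>compact K\<close> \<open>K \<noteq> {}\<close>] by blast
  then have "continuous_on K (gap K F)" by (rule lipschitz_on_continuous_on)
  then have "BR_GAS K F {z \<in> K. gap K F z = 0}"
    using gap_nonneg[OF \<open>compact K\<close> \<open>K \<noteq> {}\<close>] BR_solution_exp_gap_nonincreasing[OF assms(2,1,3-5)]
    by (rule BR_GAS_if_exp_Lyapunov[OF \<open>compact K\<close>])
  moreover have "{z \<in> K. gap K F z = 0} = SOL K F"
    using gap_eq_0_iff[OF \<open>compact K\<close> \<open>K \<noteq> {}\<close>] by (auto simp: SOL_def)
  ultimately show ?thesis by simp
qed

end
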